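(* Let $P=\langle(\mathcal Q,\le),N\rangle$ be a possibilistic logic program. The collection Poss-ASP returned by the procedure $Poss\_Answer\_Sets(P)$ is the set of all possibilistic answer sets of $P$.
   Context: $(\mathcal Q,\le)$ is a finite lattice with top $\top_{\mathcal Q}$. A possibilistic (disjunctive) logic program is $P=\langle(\mathcal Q,\le),N\rangle$ with $N$ a finite set of clauses $r=\alpha:\mathcal A\leftarrow\mathcal B^+,not\ \mathcal B^-$ and constraints $\top_{\mathcal Q}:\ \leftarrow\mathcal B^+,not\ \mathcal B^-$; strongly negated atoms are fresh atoms; $n(r)=\alpha$, $P^*$ the set of underlying clauses; answer sets of $P^*$ in the Gelfond–Lifschitz sense (complementary atoms allowed). Reduct $P_S=\{n(r):(\mathcal A\cap S)\leftarrow\mathcal B^+\mid r\in N,\mathcal A\cap S\ne\emptyset,\mathcal B^-\cap S=\emptyset,\mathcal B^+\subseteq S\}$. A positive clause $\alpha:a_1\vee\dots\vee a_m\leftarrow b_1,\dots,b_k$ is turned into the possibilistic disjunction $(a_1\vee\dots\vee a_m\vee\sim b_1\vee\dots\vee\sim b_k\ \ \alpha)$. Rule (R): from $(c_1\ \alpha_1),(c_2\ \alpha_2)$ infer $(R(c_1,c_2)\ \mathrm{GLB}\{\alpha_1,\alpha_2\})$ with $R(c_1,c_2)$ a classical resolvent. Procedure $Poss\_Answer\_Sets(P)$: for each answer set $S$ of $P^*$, let $\mathcal C$ be the set of possibilistic disjunctions obtained from $P_S$; for each $a\in S$, search for a derivation by repeated application of (R) from $\mathcal C\cup\{(\sim a\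 \top_{\mathcal Q})\}$ of the empty clause with maximal value $\alpha$, and put $(a,\alpha)$ into $S'$; add $S'$ to Poss-ASP; return Poss-ASP. Possibilistic answer sets: let $\mathcal{PS}$ be the sets of pairs (atom, element of $\mathcal Q$) with each atom at most once, $M^*$ the atoms of $M$, $A\sqsubseteq B$ iff $A^*\subseteq B^*$ and $\gamma\le\delta$ whenever $(x,\gamma)\in A,(x,\delta)\in B$; $\vdash_{PL}$ is necessity-valued possibilistic-logic inference (clauses as weighted formulas, classical axioms weighted $\top_{\mathcal Q}$, rules $(\varphi\ \gamma),(\varphi\to\psi\ \delta)\vdash(\psi\ \mathrm{GLB}\{\gamma,\delta\})$ and $(\varphi\ \gamma),(\varphi\ \delta)\vdash(\varphi\ \epsilon)$ for $\epsilon\le\mathrm{GLB}\{\gamma,\delta\}$); $P\Vvdash_{PL}M$ iff $M^*$ is an answer set of $P^*$ and $P_{M^*}\vdash_{PL}(a\ \gamma)$ for all $(a,\gamma)\in M$; $M$ is a possibilistic answer set iff $M^*$ is an answer set of $P^*$, $P\Vvdash_{PL}M$ and no $M''\ne M$ in $\mathcal{PS}$ satisfies $M\sqsubseteq M''$ and $P\Vvdash_{PL}M''$. *)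

theory Defs
  imports Main
begin

text \<open>The lattice (Q,<=) is the type 'q of class finite, lattice, order_top; GLB is inf,
  the top element is top. A clause  alpha : A <- B+, not B-  is the tuple (alpha, A, B+, B-).
  A constraint is a clause with empty head (which must carry the weight top).\<close>

type_synonym ('q, 'a) poss_clause = "'q \<times> 'a set \<times> 'a set \<times> 'a set"

definition poss_program :: "('q::{finite,lattice,order_top}, 'a) poss_clause set \<Rightarrow> bool" where
  "poss_program N \<longleftrightarrow> finite N \<and>
     (\<forall>(\<alpha>, A, Bp, Bn) \<in> N. finite A \<and> finite Bp \<and> finite Bn \<and> (A = {} \<longrightarrow> \<alpha> = top))"

definition gl_reduct :: "('q, 'a) poss_clause set \<Rightarrow> 'a set \<Rightarrow> ('a set \<times> 'a set) set" where
  "gl_reduct N S = {(A, Bp). \<exists>\<alpha> Bn. (\<alpha>, A, Bp, Bn) \<in> N \<and> Bn \<inter> S = {}}"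

definition is_model :: "('a set \<times> 'a set) set \<Rightarrow> 'a set \<Rightarrow> bool" where
  "is_model R S \<longleftrightarrow> (\<forall>(A, Bp) \<in> R. Bp \<subseteq> S \<longrightarrow> A \<inter> S \<noteq> {})"

definition answer_set :: "('q, 'a) poss_clause set \<Rightarrow> 'a set \<Rightarrow> bool" where
  "answer_set N S \<longleftrightarrow> is_model (gl_reduct N S) S \<and>
     (\<forall>S'. S' \<subset> S \<longrightarrow> \<not> is_model (gl_reduct N S) S')"

subsection \<open>The possibilistic reduct P_S (positive weighted clauses (alpha, head, body))\<close>

definition poss_reduct :: "('q, 'a) poss_clause set \<Rightarrow> 'a set \<Rightarrow> ('q \<times> 'a set \<times> 'a set) set" where
  "poss_reduct N S = {(\<alpha>, A \<inter> S, Bp) | \<alpha> A Bp Bn.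
      (\<alpha>, A, Bp, Bn) \<in> N \<and> A \<inter> S \<noteq> {} \<and> Bn \<inter> S = {} \<and> Bp \<subseteq> S}"

datatype 'a lit = Pos 'a | Neg 'a

definition poss_disj :: "'q \<times> 'a set \<times> 'a set \<Rightarrow> 'a lit set \<times> 'q" where
  "poss_disj r = (case r of (\<alpha>, A, Bp) \<Rightarrow> (Pos ` A \<union> Neg ` Bp, \<alpha>))"

inductive res_deriv :: "('a lit set \<times> 'q::{finite,lattice,order_top}) set \<Rightarrow> 'a lit set \<Rightarrow> 'q \<Rightarrow> bool"
  for C where
  res_base: "(c, \<alpha>) \<in> C \<Longrightarrow> res_deriv C c \<alpha>"
| res_step: "res_deriv C c1 \<alpha>1 \<Longrightarrow> res_deriv C c2 \<alpha>2 \<Longrightarrow> Pos x \<in> c1 \<Longrightarrow> Neg x \<in> c2 \<Longrightarrow>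
     res_deriv C ((c1 - {Pos x}) \<union> (c2 - {Neg x})) (inf \<alpha>1 \<alpha>2)"

definition refutation_values :: "('q::{finite,lattice,order_top}, 'a) poss_clause set \<Rightarrow> 'a set \<Rightarrow> 'a \<Rightarrow> 'q set" where
  "refutation_values N S a =
     {\<beta>. res_deriv (poss_disj ` poss_reduct N S \<union> {({Neg a}, top)}) {} \<beta>}"

definition is_maximal_in :: "'q::order \<Rightarrow> 'q set \<Rightarrow> bool" where
  "is_maximal_in \<alpha> V \<longleftrightarrow> \<alpha> \<in> V \<and> (\<forall>\<beta>\<in>V. \<not> \<alpha> < \<beta>)"

text \<open>The output of the procedure Poss_Answer_Sets(P): one S' for each answer set S of P*
  and each admissible choice of a maximal refutation value for every atom of S.\<close>
definition poss_answer_sets_proc :: "('q::{finite,lattice,order_top}, 'a) poss_clause set \<Rightarrow> ('a \<times> 'q) set set" where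
  "poss_answer_sets_proc N = {S'. \<exists>S. answer_set N S \<and>
      (\<forall>a \<in> S. \<exists>!\<alpha>. (a, \<alpha>) \<in> S') \<and>
      (\<forall>(a, \<alpha>) \<in> S'. a \<in> S \<and> is_maximal_in \<alpha> (refutation_values N S a))}"

datatype 'a fml = FAtom 'a | FBot | FNeg "'a fml" | FAnd "'a fml" "'a fml"
  | FOr "'a fml" "'a fml" | FImp "'a fml" "'a fml"

primrec eval :: "('a \<Rightarrow> bool) \<Rightarrow> 'a fml \<Rightarrow> bool" where
  "eval v (FAtom a) = v a"
| "eval v FBot = False"
| "eval v (FNeg \<phi>) = (\<not> eval v \<phi>)"
| "eval v (FAnd \<phi> \<psi>) = (eval v \<phi> \<and> eval v \<psi>)"
| "eval v (FOr \<phi> \<psi>) = (eval v \<phi> \<or> eval v \<psi>)"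
| "eval v (FImp \<phi> \<psi>) = (eval v \<phi> \<longrightarrow> eval v \<psi>)"

definition tautology :: "'a fml \<Rightarrow> bool" where
  "tautology \<phi> \<longleftrightarrow> (\<forall>v. eval v \<phi>)"

definition list_of :: "'a set \<Rightarrow> 'a list" where
  "list_of S = (SOME xs. set xs = S \<and> distinct xs)"

definition clause_fml :: "'a set \<Rightarrow> 'a set \<Rightarrow> 'a fml" where
  "clause_fml A Bp = FImp (foldr (\<lambda>b \<phi>. FAnd (FAtom b) \<phi>) (list_of Bp) (FNeg FBot))
                          (foldr (\<lambda>a \<phi>. FOr (FAtom a) \<phi>) (list_of A) FBot)"

inductive pl_deriv :: "('q::{finite,lattice,order_top} \<times> 'a set \<times> 'a set) set \<Rightarrow> 'a fml \<Rightarrow> 'q \<Rightarrow> bool"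
  for R where
  pl_clause: "(\<alpha>, A, Bp) \<in> R \<Longrightarrow> pl_deriv R (clause_fml A Bp) \<alpha>"
| pl_axiom: "tautology \<phi> \<Longrightarrow> pl_deriv R \<phi> top"
| pl_mp: "pl_deriv R \<phi> \<gamma> \<Longrightarrow> pl_deriv R (FImp \<phi> \<psi>) \<delta> \<Longrightarrow> pl_deriv R \<psi> (inf \<gamma> \<delta>)"
| pl_weaken: "pl_deriv R \<phi> \<gamma> \<Longrightarrow> pl_deriv R \<phi> \<delta> \<Longrightarrow> \<epsilon> \<le> inf \<gamma> \<delta> \<Longrightarrow> pl_deriv R \<phi> \<epsilon>"

definition is_PS :: "('a \<times> 'q) set \<Rightarrow> bool" where
  "is_PS M \<longleftrightarrow> (\<forall>x \<gamma> \<delta>. (x, \<gamma>) \<in> M \<longrightarrow> (x, \<delta>) \<in> M \<longrightarrow> \<gamma> = \<delta>)"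

definition poss_le :: "('a \<times> 'q::order) set \<Rightarrow> ('a \<times> 'q) set \<Rightarrow> bool" where
  "poss_le A B \<longleftrightarrow> fst ` A \<subseteq> fst ` B \<and>
     (\<forall>x \<gamma> \<delta>. (x, \<gamma>) \<in> A \<longrightarrow> (x, \<delta>) \<in> B \<longrightarrow> \<gamma> \<le> \<delta>)"

definition poss_entails :: "('q::{finite,lattice,order_top}, 'a) poss_clause set \<Rightarrow> ('a \<times> 'q) set \<Rightarrow> bool" where
  "poss_entails N M \<longleftrightarrow> answer_set N (fst ` M) \<and>
     (\<forall>(a, \<gamma>) \<in> M. pl_deriv (poss_reduct N (fst ` M)) (FAtom a) \<gamma>)"

definition poss_answer_set :: "('q::{finite,lattice,order_top}, 'a) poss_clause set \<Rightarrow> ('a \<times> 'q) set \<Rightarrow> bool" where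
  "poss_answer_set N M \<longleftrightarrow> is_PS M \<and> answer_set N (fst ` M) \<and> poss_entails N M \<and>
     \<not> (\<exists>M''. is_PS M'' \<and> M'' \<noteq> M \<and> poss_le M M'' \<and> poss_entails N M'')"

end

theory Submission
  imports Defs
begin

text \<open>Both the procedure and the definition select, for every atom a of an answer set S of P*,
  a maximal degree \<alpha> with which a follows from the reduct P_S; they only differ in how
  ``a follows with degree \<alpha>'' is certified. Either certificate is equivalent to classical
  entailment of a by the \<alpha>-cut of P_S (its clauses of weight at least \<alpha>): a possibilistic
  derivation by soundness and by deriving with weight top the tautological implication from the
  cut clauses to a; a resolution refutation of \<not>a by soundness and by Davis--Putnam splitting on
  the finitely many atoms. Hence every refutation value is a derivable degree and every derivable
  degree lies below a refutation value, so the maximal ones coincide. Maximality of a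
  possibilistic answer set reduces to maximality of each degree because the answer sets of P*
  form an antichain, so a competitor above M has the same atoms.\<close>

section \<open>Weighted resolution\<close>

fun atm :: "'a lit \<Rightarrow> 'a" where
  "atm (Pos a) = a" | "atm (Neg a) = a"

fun lneg :: "'a lit \<Rightarrow> 'a lit" where
  "lneg (Pos a) = Neg a" | "lneg (Neg a) = Pos a"

fun lit_true :: "('a \<Rightarrow> bool) \<Rightarrow> 'a lit \<Rightarrow> bool" where
  "lit_true v (Pos a) = v a" | "lit_true v (Neg a) = (\<not> v a)"

definition clause_true :: "('a \<Rightarrow> bool) \<Rightarrow> 'a lit set \<Rightarrow> bool" where
  "clause_true v d \<longleftrightarrow> (\<exists>l\<in>d. lit_true v l)"

definition satisfies :: "('a \<Rightarrow> bool) \<Rightarrow> ('a lit set \<times> 'q) set \<Rightarrow> bool" where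
  "satisfies v K \<longleftrightarrow> (\<forall>p\<in>K. clause_true v (fst p))"

definition weight_cut :: "('c \<times> 'q::order) set \<Rightarrow> 'q \<Rightarrow> ('c \<times> 'q) set" where
  "weight_cut C \<gamma> = {p\<in>C. \<gamma> \<le> snd p}"

definition atoms :: "('a lit set \<times> 'q) set \<Rightarrow> 'a set" where
  "atoms K = (\<Union>p\<in>K. atm ` fst p)"

lemma lit_true_fun_upd_other: "atm l \<noteq> x \<Longrightarrow> lit_true (v(x := b)) l = lit_true v l"
  by (cases l) auto

lemma ex_fun_upd_lit_true: "\<exists>b. lit_true (v(atm l := b)) l"
  by (cases l) auto

lemma res_deriv_sound:
  assumes "res_deriv C c \<beta>" "satisfies v (weight_cut C \<beta>)"
  shows "clause_true v c"
  using assms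
proof (induction rule: res_deriv.induct)
  case (res_base c \<alpha>)
  then show ?case by (auto simp: satisfies_def weight_cut_def)
next
  case (res_step c1 \<alpha>1 c2 \<alpha>2 x)
  have "clause_true v c1" "clause_true v c2"
    using res_step.prems
    by (auto intro!: res_step.IH simp: satisfies_def weight_cut_def) (meson inf_le1 inf_le2 order_trans)+
  then show ?case
    using res_step.hyps(3,4) by (cases "v x") (fastforce simp: clause_true_def)+
qed

lemma res_deriv_mono: "res_deriv K c \<beta> \<Longrightarrow> K \<subseteq> C \<Longrightarrow> res_deriv C c \<beta>"
  by (induction rule: res_deriv.induct) (auto intro: res_deriv.intros)

lemma res_deriv_lower_bound: "res_deriv K c \<beta> \<Longrightarrow> \<forall>p\<in>K. \<gamma> \<le> snd p \<Longrightarrow> \<gamma> \<le> \<beta>"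
  by (induction rule: res_deriv.induct) auto

definition assign_lit :: "'a lit \<Rightarrow> ('a lit set \<times> 'q) set \<Rightarrow> ('a lit set \<times> 'q) set" where
  "assign_lit l K = {(d - {lneg l}, \<alpha>) | d \<alpha>. (d, \<alpha>) \<in> K \<and> l \<notin> d}"

lemma atoms_assign_lit: "atoms (assign_lit l K) \<subseteq> atoms K - {atm l}"
proof
  fix y assume "y \<in> atoms (assign_lit l K)"
  then obtain d \<alpha> m where "(d, \<alpha>) \<in> K" "l \<notin> d" "m \<in> d" "m \<noteq> lneg l" "y = atm m"
    unfolding assign_lit_def atoms_def by auto
  then show "y \<in> atoms K - {atm l}"
    unfolding atoms_def by (cases l; cases m) force+
qed

lemma satisfies_assign_lit:
  assumes "satisfies v (assign_lit l K)" "lit_true (v(atm l := b)) l"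
  shows "satisfies (v(atm l := b)) K"
  unfolding satisfies_def
proof
  let ?w = "v(atm l := b)"
  fix p assume "p \<in> K"
  obtain d \<alpha> where p: "p = (d, \<alpha>)" by (cases p)
  show "clause_true ?w (fst p)"
  proof (cases "l \<in> d")
    case True
    then show ?thesis using assms(2) p by (auto simp: clause_true_def)
  next
    case False
    then have "(d - {lneg l}, \<alpha>) \<in> assign_lit l K"
      using \<open>p \<in> K\<close> p unfolding assign_lit_def by blast
    then obtain m where "m \<in> d" "m \<noteq> lneg l" "lit_true v m"
      using assms(1) unfolding satisfies_def clause_true_def by fastforce
    moreover have "atm m \<noteq> atm l" using \<open>m \<in> d\<close> \<open>m \<noteq> lneg l\<close> False
      by (cases l; cases m) auto
    ultimately show ?thesis using p lit_true_fun_upd_other by (fastforce simp: clause_true_def)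
  qed
qed

lemma unsatisfiable_assign_lit:
  assumes "\<forall>v. \<not> satisfies v K"
  shows "\<forall>v. \<not> satisfies v (assign_lit l K)"
  using assms satisfies_assign_lit ex_fun_upd_lit_true by metis

lemma res_deriv_assign_lit:
  assumes "res_deriv (assign_lit l K) c \<beta>"
  shows "l \<notin> c \<and> lneg l \<notin> c \<and> (\<exists>c'. res_deriv K c' \<beta> \<and> c' - {lneg l} = c)"
  using assms
proof (induction rule: res_deriv.induct)
  case (res_base c \<alpha>)
  then obtain d where "c = d - {lneg l}" "(d, \<alpha>) \<in> K" "l \<notin> d"
    unfolding assign_lit_def by blast
  then show ?case by (auto intro: res_deriv.res_base)
next
  case (res_step c1 \<alpha>1 c2 \<alpha>2 x)
  then obtain c1' c2' where
    c1': "res_deriv K c1' \<alpha>1" "c1' - {lneg l} = c1" and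
    c2': "res_deriv K c2' \<alpha>2" "c2' - {lneg l} = c2" by blast
  have "res_deriv K ((c1' - {Pos x}) \<union> (c2' - {Neg x})) (inf \<alpha>1 \<alpha>2)"
    using c1' c2' res_step.hyps(3,4) by (intro res_deriv.res_step) auto
  moreover have "((c1' - {Pos x}) \<union> (c2' - {Neg x})) - {lneg l} = (c1 - {Pos x}) \<union> (c2 - {Neg x})"
    using c1'(2) c2'(2) res_step.IH res_step.hyps(3,4) by auto
  ultimately show ?case using res_step.IH by blast
qed

lemma res_refutation_complete:
  assumes "finite X" "atoms K \<subseteq> X" "\<forall>v. \<not> satisfies v K"
  shows "\<exists>\<beta>. res_deriv K {} \<beta>"
  using assms
proof (induction X arbitrary: K rule: finite_induct)
  case empty
  then obtain p where "p \<in> K" unfolding satisfies_def by blast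
  moreover from this have "fst p = {}" using empty.prems(1) unfolding atoms_def by blast
  ultimately have "({}, snd p) \<in> K" by (metis prod.collapse)
  then show ?case by (blast intro: res_deriv.res_base)
next
  case (insert x X)
  have split: "\<exists>c \<beta>. res_deriv K c \<beta> \<and> c \<subseteq> {lneg l}" if "atm l = x" for l
  proof -
    have "atoms (assign_lit l K) \<subseteq> X"
      using atoms_assign_lit[of l K] insert.prems(1) that by blast
    then obtain \<beta> where "res_deriv (assign_lit l K) {} \<beta>"
      using insert.IH unsatisfiable_assign_lit[OF insert.prems(2)] by blast
    then show ?thesis using res_deriv_assign_lit by blast
  qed
  obtain c1 \<beta>1 where c1: "res_deriv K c1 \<beta>1" "c1 \<subseteq> {Neg x}" using split[of "Pos x"] by auto
  obtain c2 \<beta>2 where c2: "res_deriv K c2 \<beta>2" "c2 \<subseteq> {Pos x}" using split[of "Neg x"] by auto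
  show ?case
  proof (cases "c1 = {} \<or> c2 = {}")
    case True
    then show ?thesis using c1 c2 by blast
  next
    case False
    then have "c1 = {Neg x}" "c2 = {Pos x}" using c1(2) c2(2) by blast+
    then have "res_deriv K (({Pos x} - {Pos x}) \<union> ({Neg x} - {Neg x})) (inf \<beta>2 \<beta>1)"
      using c1(1) c2(1) by (intro res_deriv.res_step) auto
    then show ?thesis by auto
  qed
qed

lemma res_refutation_complete_cut:
  assumes "finite C" "\<forall>p\<in>C. finite (fst p)" "\<forall>v. \<not> satisfies v (weight_cut C \<gamma>)"
  shows "\<exists>\<beta>. \<gamma> \<le> \<beta> \<and> res_deriv C {} \<beta>"
proof -
  let ?K = "weight_cut C \<gamma>"
  have K: "?K \<subseteq> C" "\<forall>p\<in>?K. \<gamma> \<le> snd p" by (auto simp: weight_cut_def)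
  have "finite ?K" using finite_subset[OF K(1) assms(1)] .
  then have "finite (atoms ?K)" unfolding atoms_def using assms(2) K(1) by auto
  then obtain \<beta> where "res_deriv ?K {} \<beta>"
    using res_refutation_complete[OF _ order_refl assms(3)] by blast
  then show ?thesis using res_deriv_lower_bound[OF _ K(2)] res_deriv_mono[OF _ K(1)] by blast
qed

section \<open>Possibilistic logic and weight cuts\<close>

lemma set_list_of: "finite S \<Longrightarrow> set (list_of S) = S"
  unfolding list_of_def by (rule someI2_ex[OF finite_distinct_list]) auto

lemma eval_clause_fml:
  assumes "finite A" "finite Bp"
  shows "eval v (clause_fml A Bp) \<longleftrightarrow> (\<exists>a\<in>A. v a) \<or> (\<exists>b\<in>Bp. \<not> v b)"
proof -
  have conj: "eval v (foldr (\<lambda>b \<phi>. FAnd (FAtom b) \<phi>) xs (FNeg FBot)) = (\<forall>b\<in>set xs. v b)"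
    and disj: "eval v (foldr (\<lambda>a \<phi>. FOr (FAtom a) \<phi>) xs FBot) = (\<exists>a\<in>set xs. v a)" for xs
    by (induction xs) auto
  show ?thesis using assms by (auto simp: clause_fml_def conj disj set_list_of)
qed

definition cut_entails :: "('q::order \<times> 'a set \<times> 'a set) set \<Rightarrow> 'q \<Rightarrow> 'a fml \<Rightarrow> bool" where
  "cut_entails R \<gamma> \<phi> \<longleftrightarrow>
     (\<forall>v. (\<forall>(\<alpha>, A, Bp)\<in>R. \<gamma> \<le> \<alpha> \<longrightarrow> eval v (clause_fml A Bp)) \<longrightarrow> eval v \<phi>)"

lemma cut_entails_antimono:
  assumes "cut_entails R \<gamma> \<phi>" "\<gamma>' \<le> \<gamma>"
  shows "cut_entails R \<gamma>' \<phi>"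
  using assms order_trans unfolding cut_entails_def by fastforce

lemma pl_deriv_sound: "pl_deriv R \<phi> \<gamma> \<Longrightarrow> cut_entails R \<gamma> \<phi>"
proof (induction rule: pl_deriv.induct)
  case (pl_clause \<alpha> A Bp)
  then show ?case unfolding cut_entails_def by fastforce
next
  case (pl_axiom \<phi>)
  then show ?case unfolding cut_entails_def tautology_def by auto
next
  case (pl_mp \<phi> \<gamma> \<psi> \<delta>)
  have "cut_entails R (inf \<gamma> \<delta>) \<phi>" "cut_entails R (inf \<gamma> \<delta>) (FImp \<phi> \<psi>)"
    using pl_mp.IH by (auto intro: cut_entails_antimono)
  then show ?case unfolding cut_entails_def by simp
next
  case (pl_weaken \<phi> \<gamma> \<delta> \<epsilon>)
  then show ?case by (auto intro: cut_entails_antimono)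
qed

definition imp_chain :: "('q \<times> 'a set \<times> 'a set) list \<Rightarrow> 'a fml \<Rightarrow> 'a fml" where
  "imp_chain rs \<phi> = foldr (\<lambda>(\<alpha>, A, Bp) \<psi>. FImp (clause_fml A Bp) \<psi>) rs \<phi>"

lemma eval_imp_chain:
  "eval v (imp_chain rs \<phi>) \<longleftrightarrow> ((\<forall>(\<alpha>, A, Bp)\<in>set rs. eval v (clause_fml A Bp)) \<longrightarrow> eval v \<phi>)"
  unfolding imp_chain_def by (induction rs) auto

lemma pl_deriv_imp_chain:
  assumes "pl_deriv R (imp_chain rs \<phi>) \<delta>" "\<forall>(\<alpha>, A, Bp)\<in>set rs. (\<alpha>, A, Bp) \<in> R \<and> \<gamma> \<le> \<alpha>"
    "\<gamma> \<le> \<delta>"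
  shows "pl_deriv R \<phi> \<gamma>"
  using assms
proof (induction rs arbitrary: \<delta>)
  case Nil
  then show ?case using pl_weaken[of R \<phi> \<delta> \<delta> \<gamma>] by (simp add: imp_chain_def)
next
  case (Cons r rs)
  obtain \<alpha> A Bp where r: "r = (\<alpha>, A, Bp)" by (cases r)
  have "pl_deriv R (FImp (clause_fml A Bp) (imp_chain rs \<phi>)) \<delta>"
    using Cons.prems(1) r by (simp add: imp_chain_def)
  with Cons.prems(2) r have "pl_deriv R (imp_chain rs \<phi>) (inf \<alpha> \<delta>)"
    by (auto intro: pl_mp pl_clause)
  then show ?case using Cons.IH Cons.prems r by auto
qed

text \<open>Completeness: the implication chain from the clauses of the \<gamma>-cut to \<phi> is a tautology,
  hence derivable with weight top; discharging its premises by modus ponens keeps the weight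
  at least \<gamma>.\<close>
lemma pl_deriv_complete:
  assumes "finite R" "cut_entails R \<gamma> \<phi>"
  shows "pl_deriv R \<phi> \<gamma>"
proof -
  have "finite {(\<alpha>, A, Bp)\<in>R. \<gamma> \<le> \<alpha>}" using assms(1) by (rule rev_finite_subset) auto
  then obtain rs where rs: "set rs = {(\<alpha>, A, Bp)\<in>R. \<gamma> \<le> \<alpha>}"
    using finite_list by blast
  have "tautology (imp_chain rs \<phi>)"
    using assms(2) rs unfolding tautology_def cut_entails_def eval_imp_chain by fastforce
  then have "pl_deriv R (imp_chain rs \<phi>) top" by (rule pl_axiom)
  then show ?thesis using pl_deriv_imp_chain[of R rs \<phi> top \<gamma>] rs by auto
qed

lemma pl_deriv_iff_cut_entails: "finite R \<Longrightarrow> pl_deriv R \<phi> \<gamma> \<longleftrightarrow> cut_entails R \<gamma> \<phi>"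
  using pl_deriv_sound pl_deriv_complete by blast

section \<open>Refutation values versus derivable degrees\<close>

definition finite_rules :: "('q \<times> 'a set \<times> 'a set) set \<Rightarrow> bool" where
  "finite_rules R \<longleftrightarrow> finite R \<and> (\<forall>(\<alpha>, A, Bp)\<in>R. finite A \<and> finite Bp)"

abbreviation refutation_input :: "('q::order_top \<times> 'a set \<times> 'a set) set \<Rightarrow> 'a \<Rightarrow> ('a lit set \<times> 'q) set" where
  "refutation_input R a \<equiv> poss_disj ` R \<union> {({Neg a}, top)}"

lemma satisfies_weight_cut_image:
  "satisfies v (weight_cut (f ` X) \<gamma>) \<longleftrightarrow> (\<forall>x\<in>X. \<gamma> \<le> snd (f x) \<longrightarrow> clause_true v (fst (f x)))"
  unfolding satisfies_def weight_cut_def by blast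

lemma satisfies_weight_cut_Un:
  "satisfies v (weight_cut (C \<union> D) \<gamma>) \<longleftrightarrow> satisfies v (weight_cut C \<gamma>) \<and> satisfies v (weight_cut D \<gamma>)"
  unfolding satisfies_def weight_cut_def by blast

lemma satisfies_weight_cut_top:
  "satisfies v (weight_cut {(d, top :: 'q::order_top)} \<gamma>) \<longleftrightarrow> clause_true v d"
  unfolding satisfies_def weight_cut_def by simp

lemma clause_true_poss_disj:
  assumes "finite A" "finite Bp"
  shows "clause_true v (fst (poss_disj (\<alpha>, A, Bp))) \<longleftrightarrow> eval v (clause_fml A Bp)"
proof -
  have "clause_true v (Pos ` A \<union> Neg ` Bp) \<longleftrightarrow>
      (\<exists>a\<in>A. lit_true v (Pos a)) \<or> (\<exists>b\<in>Bp. lit_true v (Neg b))"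
    unfolding clause_true_def bex_Un by blast
  then show ?thesis by (simp add: poss_disj_def eval_clause_fml assms)
qed

lemma snd_poss_disj: "snd (poss_disj r) = fst r"
  by (cases r) (simp add: poss_disj_def)

lemma satisfies_refutation_input_cut:
  assumes "finite_rules R"
  shows "satisfies v (weight_cut (refutation_input R a) \<gamma>) \<longleftrightarrow>
    (\<forall>(\<alpha>, A, Bp)\<in>R. \<gamma> \<le> \<alpha> \<longrightarrow> eval v (clause_fml A Bp)) \<and> \<not> v a"
proof -
  have rule_cut: "(\<gamma> \<le> snd (poss_disj r) \<longrightarrow> clause_true v (fst (poss_disj r))) \<longleftrightarrow>
      (case r of (\<alpha>, A, Bp) \<Rightarrow> \<gamma> \<le> \<alpha> \<longrightarrow> eval v (clause_fml A Bp))" if "r \<in> R" for r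
  proof -
    obtain \<alpha> A Bp where r: "r = (\<alpha>, A, Bp)" by (cases r)
    then have "finite A" "finite Bp" using assms that by (auto simp: finite_rules_def)
    then have "clause_true v (fst (poss_disj r)) \<longleftrightarrow> eval v (clause_fml A Bp)"
      unfolding r by (rule clause_true_poss_disj)
    then show ?thesis using r by (simp add: snd_poss_disj)
  qed
  have "satisfies v (weight_cut (refutation_input R a) \<gamma>) \<longleftrightarrow>
      (\<forall>r\<in>R. \<gamma> \<le> snd (poss_disj r) \<longrightarrow> clause_true v (fst (poss_disj r))) \<and> \<not> v a"
    unfolding satisfies_weight_cut_Un satisfies_weight_cut_image satisfies_weight_cut_top
    by (simp add: clause_true_def)
  also have "(\<forall>r\<in>R. \<gamma> \<le> snd (poss_disj r) \<longrightarrow> clause_true v (fst (poss_disj r))) \<longleftrightarrow>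
      (\<forall>(\<alpha>, A, Bp)\<in>R. \<gamma> \<le> \<alpha> \<longrightarrow> eval v (clause_fml A Bp))"
    by (rule ball_cong[OF refl]) (rule rule_cut)
  finally show ?thesis .
qed

lemma cut_entails_atom_iff:
  assumes "finite_rules R"
  shows "cut_entails R \<gamma> (FAtom a) \<longleftrightarrow> (\<forall>v. \<not> satisfies v (weight_cut (refutation_input R a) \<gamma>))"
  unfolding cut_entails_def satisfies_refutation_input_cut[OF assms] eval.simps
  by (simp only: de_Morgan_conj not_not imp_conv_disj)

lemma refutation_imp_cut_entails:
  assumes "finite_rules R" "res_deriv (refutation_input R a) {} \<beta>"
  shows "cut_entails R \<beta> (FAtom a)"
  unfolding cut_entails_atom_iff[OF assms(1)]
  using res_deriv_sound[OF assms(2)] by (auto simp: clause_true_def)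

lemma cut_entails_imp_refutation:
  assumes "finite_rules R" "cut_entails R \<gamma> (FAtom a)"
  shows "\<exists>\<beta>. \<gamma> \<le> \<beta> \<and> res_deriv (refutation_input R a) {} \<beta>"
proof (rule res_refutation_complete_cut)
  show "finite (refutation_input R a)" using assms(1) by (simp add: finite_rules_def)
  show "\<forall>p\<in>refutation_input R a. finite (fst p)"
    using assms(1) by (auto simp: finite_rules_def poss_disj_def)
  show "\<forall>v. \<not> satisfies v (weight_cut (refutation_input R a) \<gamma>)"
    using assms(2) unfolding cut_entails_atom_iff[OF assms(1)] .
qed

lemma finite_rules_poss_reduct:
  assumes "poss_program N"
  shows "finite_rules (poss_reduct N S)"
proof -
  have "poss_reduct N S \<subseteq> (\<lambda>(\<alpha>, A, Bp, Bn). (\<alpha>, A \<inter> S, Bp)) ` N"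
    unfolding poss_reduct_def by force
  then have "finite (poss_reduct N S)"
    using assms unfolding poss_program_def by (meson finite_imageI finite_subset)
  moreover have "finite A \<and> finite Bp" if r: "(\<alpha>, A, Bp) \<in> poss_reduct N S" for \<alpha> A Bp
  proof -
    obtain A' Bn where "(\<alpha>, A', Bp, Bn) \<in> N" "A = A' \<inter> S"
      using r unfolding poss_reduct_def by blast
    then show ?thesis using assms unfolding poss_program_def by auto
  qed
  ultimately show ?thesis unfolding finite_rules_def by blast
qed

lemma is_maximal_in_cofinal:
  assumes "V \<subseteq> W" and cofinal: "\<forall>w\<in>W. \<exists>v\<in>V. w \<le> v"
  shows "is_maximal_in \<alpha> V \<longleftrightarrow> is_maximal_in \<alpha> W"
  unfolding is_maximal_in_def
proof
  assume max: "\<alpha> \<in> V \<and> (\<forall>\<beta>\<in>V. \<not> \<alpha> < \<beta>)"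
  have "\<not> \<alpha> < \<beta>" if "\<beta> \<in> W" for \<beta>
  proof
    assume "\<alpha> < \<beta>"
    obtain v where "v \<in> V" "\<beta> \<le> v" using cofinal \<open>\<beta> \<in> W\<close> by blast
    then show False using max \<open>\<alpha> < \<beta>\<close> order_less_le_trans by blast
  qed
  then show "\<alpha> \<in> W \<and> (\<forall>\<beta>\<in>W. \<not> \<alpha> < \<beta>)" using max assms(1) by blast
next
  assume max: "\<alpha> \<in> W \<and> (\<forall>\<beta>\<in>W. \<not> \<alpha> < \<beta>)"
  then obtain v where "v \<in> V" "\<alpha> \<le> v" using cofinal by blast
  then have "\<alpha> = v" using max assms(1) order_le_less by blast
  then show "\<alpha> \<in> V \<and> (\<forall>\<beta>\<in>V. \<not> \<alpha> < \<beta>)" using max assms(1) \<open>v \<in> V\<close> by blast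
qed

lemma maximal_refutation_value_iff:
  assumes "poss_program N"
  shows "is_maximal_in \<alpha> (refutation_values N S a) \<longleftrightarrow>
    is_maximal_in \<alpha> {\<gamma>. pl_deriv (poss_reduct N S) (FAtom a) \<gamma>}"
proof (rule is_maximal_in_cofinal)
  have R: "finite_rules (poss_reduct N S)" using finite_rules_poss_reduct[OF assms] .
  then have pl: "pl_deriv (poss_reduct N S) (FAtom a) \<gamma> \<longleftrightarrow> cut_entails (poss_reduct N S) \<gamma> (FAtom a)"
    for \<gamma> using pl_deriv_iff_cut_entails by (auto simp: finite_rules_def)
  show "refutation_values N S a \<subseteq> {\<gamma>. pl_deriv (poss_reduct N S) (FAtom a) \<gamma>}"
    using refutation_imp_cut_entails[OF R] by (auto simp: refutation_values_def pl)
  show "\<forall>w\<in>{\<gamma>. pl_deriv (poss_reduct N S) (FAtom a) \<gamma>}. \<exists>v\<in>refutation_values N S a. w \<le> v"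
    using cut_entails_imp_refutation[OF R] by (auto simp: refutation_values_def pl)
qed

section \<open>Possibilistic answer sets\<close>

lemma answer_set_antichain:
  assumes "answer_set N S" "answer_set N S'" "S \<subseteq> S'"
  shows "S = S'"
proof (rule ccontr)
  assume "S \<noteq> S'"
  have "gl_reduct N S' \<subseteq> gl_reduct N S" unfolding gl_reduct_def using assms(3) by blast
  moreover have "is_model (gl_reduct N S) S" using assms(1) unfolding answer_set_def by auto
  ultimately have "is_model (gl_reduct N S') S" unfolding is_model_def by blast
  then show False using assms(2,3) \<open>S \<noteq> S'\<close> unfolding answer_set_def by blast
qed

lemma poss_answer_sets_proc_iff:
  "M \<in> poss_answer_sets_proc N \<longleftrightarrow> is_PS M \<and> answer_set N (fst ` M) \<and>
    (\<forall>(a, \<alpha>)\<in>M. is_maximal_in \<alpha> (refutation_values N (fst ` M) a))"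
    (is "_ \<longleftrightarrow> ?rhs")
proof
  assume "M \<in> poss_answer_sets_proc N"
  then obtain S where S: "answer_set N S" and unique: "\<forall>a\<in>S. \<exists>!\<alpha>. (a, \<alpha>) \<in> M"
    and max: "\<forall>(a, \<alpha>)\<in>M. a \<in> S \<and> is_maximal_in \<alpha> (refutation_values N S a)"
    unfolding poss_answer_sets_proc_def by blast
  have fst_M: "fst ` M = S"
  proof
    show "fst ` M \<subseteq> S" using max by auto
    show "S \<subseteq> fst ` M" using unique by (fastforce intro: rev_image_eqI)
  qed
  have "is_PS M" unfolding is_PS_def
  proof (intro allI impI)
    fix x \<gamma> \<delta> assume "(x, \<gamma>) \<in> M" "(x, \<delta>) \<in> M"
    moreover from this have "x \<in> S" using max by auto
    ultimately show "\<gamma> = \<delta>" using unique by blast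
  qed
  then show ?rhs unfolding fst_M using S max by auto
next
  assume M: ?rhs
  have "\<forall>a\<in>fst ` M. \<exists>!\<alpha>. (a, \<alpha>) \<in> M" using M unfolding is_PS_def by force
  moreover have "\<forall>(a, \<alpha>)\<in>M. a \<in> fst ` M \<and> is_maximal_in \<alpha> (refutation_values N (fst ` M) a)"
    using M by (auto intro: rev_image_eqI)
  ultimately show "M \<in> poss_answer_sets_proc N" unfolding poss_answer_sets_proc_def using M by blast
qed

lemma fst_image_eq_imp_conflict:
  assumes "fst ` M = fst ` M'" "M \<noteq> M'"
  obtains x \<gamma> \<delta> where "(x, \<gamma>) \<in> M" "(x, \<delta>) \<in> M'" "\<gamma> \<noteq> \<delta>"
proof (cases "M \<subseteq> M'")
  case True
  then obtain x \<delta> where "(x, \<delta>) \<in> M'" "(x, \<delta>) \<notin> M" using assms(2) by auto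
  moreover obtain \<gamma> where "(x, \<gamma>) \<in> M" using assms(1) \<open>(x, \<delta>) \<in> M'\<close> by force
  ultimately show thesis using that by blast
next
  case False
  then obtain x \<gamma> where "(x, \<gamma>) \<in> M" "(x, \<gamma>) \<notin> M'" by auto
  moreover obtain \<delta> where "(x, \<delta>) \<in> M'" using assms(1) \<open>(x, \<gamma>) \<in> M\<close> by force
  ultimately show thesis using that by blast
qed

lemma poss_answer_set_imp_maximal:
  assumes "poss_answer_set N M" "(a, \<alpha>) \<in> M"
  shows "is_maximal_in \<alpha> {\<gamma>. pl_deriv (poss_reduct N (fst ` M)) (FAtom a) \<gamma>}"
  unfolding is_maximal_in_def
proof (intro conjI ballI notI)
  show "\<alpha> \<in> {\<gamma>. pl_deriv (poss_reduct N (fst ` M)) (FAtom a) \<gamma>}"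
    using assms unfolding poss_answer_set_def poss_entails_def by blast
next
  fix \<beta> assume "\<beta> \<in> {\<gamma>. pl_deriv (poss_reduct N (fst ` M)) (FAtom a) \<gamma>}" "\<alpha> < \<beta>"
  define M' where "M' = insert (a, \<beta>) (M - {(a, \<alpha>)})"
  have PS: "is_PS M" "answer_set N (fst ` M)" "poss_entails N M"
    using assms(1) unfolding poss_answer_set_def by auto
  have fst_M': "fst ` M' = fst ` M" unfolding M'_def using assms(2) by force
  have "is_PS M'" using PS(1) assms(2) unfolding is_PS_def M'_def by blast
  moreover have "M' \<noteq> M"
    using PS(1) assms(2) \<open>\<alpha> < \<beta>\<close> unfolding M'_def is_PS_def by blast
  moreover have "poss_le M M'"
    using PS(1) assms(2) \<open>\<alpha> < \<beta>\<close> fst_M' unfolding poss_le_def M'_def is_PS_def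
    by (metis Pair_inject insertE DiffD1 order_less_imp_le order_refl)
  moreover have "poss_entails N M'"
    using PS(2,3) \<open>\<beta> \<in> _\<close> fst_M' unfolding poss_entails_def M'_def by auto
  ultimately show False using assms(1) unfolding poss_answer_set_def by blast
qed

lemma maximal_imp_poss_answer_set:
  assumes "is_PS M" "answer_set N (fst ` M)"
    and max: "\<forall>(a, \<alpha>)\<in>M. is_maximal_in \<alpha> {\<gamma>. pl_deriv (poss_reduct N (fst ` M)) (FAtom a) \<gamma>}"
  shows "poss_answer_set N M"
proof -
  have max_at: "is_maximal_in \<alpha> {\<gamma>. pl_deriv (poss_reduct N (fst ` M)) (FAtom a) \<gamma>}"
    if "(a, \<alpha>) \<in> M" for a \<alpha>
    using max that by blast
  then have "poss_entails N M"
    using assms(2) unfolding poss_entails_def is_maximal_in_def by auto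
  moreover have False if "M' \<noteq> M" "poss_le M M'" "poss_entails N M'" for M'
  proof -
    have "answer_set N (fst ` M')" "fst ` M \<subseteq> fst ` M'"
      using that(2,3) unfolding poss_le_def poss_entails_def by auto
    then have fst_M': "fst ` M = fst ` M'" by (rule answer_set_antichain[OF assms(2)])
    moreover have "M \<noteq> M'" using that(1) by blast
    ultimately obtain x \<gamma> \<delta> where conflict: "(x, \<gamma>) \<in> M" "(x, \<delta>) \<in> M'" "\<gamma> \<noteq> \<delta>"
      by (rule fst_image_eq_imp_conflict)
    have "\<gamma> \<le> \<delta>" using that(2) conflict(1,2) unfolding poss_le_def by blast
    with conflict(3) have "\<gamma> < \<delta>" by simp
    moreover have "pl_deriv (poss_reduct N (fst ` M)) (FAtom x) \<delta>"
      using that(3) conflict(2) unfolding fst_M' poss_entails_def by blast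
    ultimately show False using max_at[OF conflict(1)] unfolding is_maximal_in_def by blast
  qed
  ultimately show ?thesis using assms(1,2) unfolding poss_answer_set_def by blast
qed

lemma poss_answer_set_iff:
  "poss_answer_set N M \<longleftrightarrow> is_PS M \<and> answer_set N (fst ` M) \<and>
    (\<forall>(a, \<alpha>)\<in>M. is_maximal_in \<alpha> {\<gamma>. pl_deriv (poss_reduct N (fst ` M)) (FAtom a) \<gamma>})"
    (is "_ \<longleftrightarrow> ?rhs")
proof
  assume M: "poss_answer_set N M"
  then show ?rhs using poss_answer_set_imp_maximal[OF M] unfolding poss_answer_set_def by auto
next
  assume ?rhs
  then show "poss_answer_set N M" using maximal_imp_poss_answer_set by blast
qed

theorem proposition8:
  fixes N :: "('q::{finite,lattice,order_top}, 'a) poss_clause set"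
  assumes "poss_program N"
  shows "poss_answer_sets_proc N = {M. poss_answer_set N M}"
proof -
  have "M \<in> poss_answer_sets_proc N \<longleftrightarrow> poss_answer_set N M" for M
    by (simp only: poss_answer_sets_proc_iff poss_answer_set_iff maximal_refutation_value_iff[OF assms])
  then show ?thesis by blast
qed

end
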